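(* Let $f$ be a ternary cubic form with $f_{333}\neq0$, and set $g=\Delta_{333}f-f_{333}\Delta$. (1) $f$ is completely reducible (a product of three linear forms) if and only if $g_{113}=g_{123}=g_{223}=g_{133}=g_{233}=0$. (2) If moreover $4f_{113}f_{223}-f_{123}^2\neq0$, then $f$ is completely reducible if and only if $g_{113}=g_{123}=g_{223}=0$.
   Context: A ternary cubic form is written $f=\sum_{1\le i\le j\le k\le3}f_{ijk}x_ix_jx_k$ with complex coefficients, so $f_{ijk}$ is the coefficient of $x_ix_jx_k$; the same convention applies to $g_{ijk}$ and $\Delta_{ijk}$. $\Delta$ is the Hessian of $f$ normalized as $\Delta=\tfrac12\det(\partial^2f/\partial x_i\partial x_j)$; equivalently $\Delta=\tfrac1{12}J^2[f,f,f]$, where $J^2$ is the second transvectant. *)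

theory Defs
  imports Complex_Main
begin

text \<open>Polynomials in x1, x2, x3 over the complex numbers, represented by their
coefficient function: P a b c is the coefficient of x1^a x2^b x3^c.\<close>
type_synonym poly3 = "nat \<Rightarrow> nat \<Rightarrow> nat \<Rightarrow> complex"

definition padd :: "poly3 \<Rightarrow> poly3 \<Rightarrow> poly3" where
  "padd P Q = (\<lambda>a b c. P a b c + Q a b c)"

definition psub :: "poly3 \<Rightarrow> poly3 \<Rightarrow> poly3" where
  "psub P Q = (\<lambda>a b c. P a b c - Q a b c)"

definition psmult :: "complex \<Rightarrow> poly3 \<Rightarrow> poly3" where
  "psmult s P = (\<lambda>a b c. s * P a b c)"

definition pmult :: "poly3 \<Rightarrow> poly3 \<Rightarrow> poly3" where
  "pmult P Q = (\<lambda>a b c. \<Sum>a1\<le>a. \<Sum>b1\<le>b. \<Sum>c1\<le>c.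
       P a1 b1 c1 * Q (a - a1) (b - b1) (c - c1))"

definition pderiv3 :: "nat \<Rightarrow> poly3 \<Rightarrow> poly3" where
  "pderiv3 i P = (\<lambda>a b c.
     if i = 1 then of_nat (a + 1) * P (a + 1) b c
     else if i = 2 then of_nat (b + 1) * P a (b + 1) c
     else of_nat (c + 1) * P a b (c + 1))"

definition cubic_form :: "poly3 \<Rightarrow> bool" where
  "cubic_form P \<longleftrightarrow> (\<forall>a b c. a + b + c \<noteq> 3 \<longrightarrow> P a b c = 0)"

text \<open>coeff3 P i j k is the coefficient of the monomial x_i x_j x_k.\<close>
definition cnt :: "nat \<Rightarrow> nat list \<Rightarrow> nat" where
  "cnt n xs = length (filter (\<lambda>t. t = n) xs)"

definition coeff3 :: "poly3 \<Rightarrow> nat \<Rightarrow> nat \<Rightarrow> nat \<Rightarrow> complex" where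
  "coeff3 P i j k = P (cnt 1 [i, j, k]) (cnt 2 [i, j, k]) (cnt 3 [i, j, k])"

definition pdet3 :: "(nat \<Rightarrow> nat \<Rightarrow> poly3) \<Rightarrow> poly3" where
  "pdet3 H =
     padd (psub (pmult (H 1 1) (psub (pmult (H 2 2) (H 3 3)) (pmult (H 2 3) (H 3 2))))
                (pmult (H 1 2) (psub (pmult (H 2 1) (H 3 3)) (pmult (H 2 3) (H 3 1)))))
          (pmult (H 1 3) (psub (pmult (H 2 1) (H 3 2)) (pmult (H 2 2) (H 3 1))))"

definition hessian3 :: "poly3 \<Rightarrow> poly3" where
  "hessian3 f = psmult (1/2) (pdet3 (\<lambda>i j. pderiv3 i (pderiv3 j f)))"

definition linform :: "complex \<Rightarrow> complex \<Rightarrow> complex \<Rightarrow> poly3" where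
  "linform v1 v2 v3 = (\<lambda>a b c.
     if (a, b, c) = (1, 0, 0) then v1
     else if (a, b, c) = (0, 1, 0) then v2
     else if (a, b, c) = (0, 0, 1) then v3 else 0)"

definition completely_reducible :: "poly3 \<Rightarrow> bool" where
  "completely_reducible f \<longleftrightarrow>
     (\<exists>a1 a2 a3 b1 b2 b3 c1 c2 c3.
        f = pmult (pmult (linform a1 a2 a3) (linform b1 b2 b3)) (linform c1 c2 c3))"

end

theory Submission
  imports Defs "HOL-Computational_Algebra.Fundamental_Theorem_Algebra"
begin

text \<open>
  Since f_333 is nonzero, completing the cube in x3 writes 27 f_333^2 f = y^3 + P y + R with
  y = f_133 x1 + f_233 x2 + 3 f_333 x3 and binary forms P (quadratic) and R (cubic) in x1, x2.
  Such a cubic splits into linear factors exactly when P = -3AB and R = A^3 + B^3 for binary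
  linear forms A, B, and then y^3 + P y + R = (y + A + B)(y + \<omega> A + \<omega>^2 B)(y + \<omega>^2 A + \<omega> B)
  with \<omega> a primitive cube root of unity. Up to powers of f_333, the vanishing of g_113, ..., g_233
  amounts to five polynomial equations in the coefficients of P and R. They are necessary for such
  A, B, and conversely they allow one to solve for A, B by Cardano's formula, after a substitution
  x2 \<mapsto> x2 + t x1 making the x1^6-coefficient 4 p11^3 + 27 r1^2 of 4 P^3 + 27 R^2 nonzero (if no
  such t exists, A = B works). For the direct implication, the Hessian of a product of three
  linear forms is the square of their determinant times the product, so g vanishes. For part (2),
  the nondegeneracy makes g_133 and g_233 linear combinations of g_113, g_123 and g_223.
\<close>

text \<open>
  With A = a1 x1 + a2 x2 and B = b1 x1 + b2 x2, this says P = -3AB and R = A^3 + B^3 for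
  P = p11 x1^2 + p12 x1 x2 + p22 x2^2 and R = r1 x1^3 + r2 x1^2 x2 + r3 x1 x2^2 + r4 x2^3.
\<close>
definition cardano_split ::
    "complex \<Rightarrow> complex \<Rightarrow> complex \<Rightarrow> complex \<Rightarrow> complex \<Rightarrow> complex \<Rightarrow> complex \<Rightarrow>
     complex \<Rightarrow> complex \<Rightarrow> complex \<Rightarrow> complex \<Rightarrow> bool" where
  "cardano_split p11 p12 p22 r1 r2 r3 r4 a1 a2 b1 b2 \<longleftrightarrow>
     3*a1*b1 = -p11 \<and> 3*(a1*b2 + a2*b1) = -p12 \<and> 3*a2*b2 = -p22 \<and>
     a1^3 + b1^3 = r1 \<and> 3*(a1^2*a2 + b1^2*b2) = r2 \<and> 3*(a1*a2^2 + b1*b2^2) = r3 \<and>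
     a2^3 + b2^3 = r4"

text \<open>These are the equations g = 0 after completing the cube, see
  \<open>completely_reducible_if_hessian_defect_eq_0\<close>.\<close>
definition cardano_conditions ::
    "complex \<Rightarrow> complex \<Rightarrow> complex \<Rightarrow> complex \<Rightarrow> complex \<Rightarrow> complex \<Rightarrow> complex \<Rightarrow> bool" where
  "cardano_conditions p11 p12 p22 r1 r2 r3 r4 \<longleftrightarrow>
     (4*p11*p22 - p12^2)*p11 - 9*r1*r3 + 3*r2^2 = 0 \<and>
     (4*p11*p22 - p12^2)*p12 - 27*r1*r4 + 3*r2*r3 = 0 \<and>
     (4*p11*p22 - p12^2)*p22 - 9*r2*r4 + 3*r3^2 = 0 \<and>
     p11*r3 - p12*r2 + 3*p22*r1 = 0 \<and>
     3*p11*r4 - p12*r3 + p22*r2 = 0"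

lemma cardano_split_imp_conditions:
  assumes "cardano_split p11 p12 p22 r1 r2 r3 r4 a1 a2 b1 b2"
  shows "cardano_conditions p11 p12 p22 r1 r2 r3 r4"
  using assms unfolding cardano_split_def cardano_conditions_def
  by (elim conjE) (intro conjI; algebra)

lemma cardano_conditions_unique:
  assumes disc: "4*p11^3 + 27*r1^2 \<noteq> 0"
    and "cardano_conditions p11 p12 p22 r1 r2 r3 r4"
    and "cardano_conditions p11 p12 q22 r1 r2 s3 s4"
  shows "p22 = q22 \<and> r3 = s3 \<and> r4 = s4"
proof -
  from assms(2,3) have A1: "(4*p11*p22 - p12^2)*p11 - 9*r1*r3 + 3*r2^2 = 0"
    and A2: "(4*p11*p22 - p12^2)*p12 - 27*r1*r4 + 3*r2*r3 = 0"
    and B1: "p11*r3 - p12*r2 + 3*p22*r1 = 0"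
    and B2: "3*p11*r4 - p12*r3 + p22*r2 = 0"
    and A1': "(4*p11*q22 - p12^2)*p11 - 9*r1*s3 + 3*r2^2 = 0"
    and A2': "(4*p11*q22 - p12^2)*p12 - 27*r1*s4 + 3*r2*s3 = 0"
    and B1': "p11*s3 - p12*r2 + 3*q22*r1 = 0"
    and B2': "3*p11*s4 - p12*s3 + q22*r2 = 0"
    unfolding cardano_conditions_def by auto
  have B1_diff: "p11*(r3 - s3) + 3*r1*(p22 - q22) = 0" using B1 B1' by algebra
  have A1_diff: "4*p11^2*(p22 - q22) - 9*r1*(r3 - s3) = 0" using A1 A1' by algebra
  have "(4*p11^3 + 27*r1^2)*(p22 - q22) = 0" using B1_diff A1_diff by algebra
  then have p22: "p22 = q22" using disc by simp
  have nz: "p11 \<noteq> 0 \<or> r1 \<noteq> 0" using disc by auto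
  have "p11*(r3 - s3) = 0" "r1*(r3 - s3) = 0" using B1_diff A1_diff p22 by simp_all
  then have r3: "r3 = s3" using nz by auto
  have "p11*(r4 - s4) = 0" "r1*(r4 - s4) = 0"
    using B2 B2' A2 A2' p22 r3 by algebra+
  then have "r4 = s4" using nz by auto
  with p22 r3 show ?thesis by simp
qed

text \<open>Cardano: a1^3 and b1^3 are the roots of z^2 - r1 z - p11^3/27; the remaining coefficients are
  forced by \<open>cardano_conditions_unique\<close>.\<close>
lemma cardano_split_exists_generic:
  assumes disc: "4*p11^3 + 27*r1^2 \<noteq> 0"
    and cond: "cardano_conditions p11 p12 p22 r1 r2 r3 r4"
  shows "\<exists>a1 a2 b1 b2. cardano_split p11 p12 p22 r1 r2 r3 r4 a1 a2 b1 b2"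
proof -
  obtain w0 :: complex where w0: "w0^2 = r1^2 + 4*p11^3/27"
    using nth_root_exists[of 2 "r1^2 + 4*p11^3/27"] by auto
  have "w0 \<noteq> 0" using w0 disc by (auto simp: field_simps)
  then obtain w where w: "w^2 = r1^2 + 4*p11^3/27" "w \<noteq> 0" "r1 + w \<noteq> 0"
  proof (cases "r1 + w0 = 0")
    case True
    then have "r1 = -w0" by (simp add: eq_neg_iff_add_eq_0)
    then have "r1 + (-w0) \<noteq> 0" using \<open>w0 \<noteq> 0\<close> by simp
    with w0 \<open>w0 \<noteq> 0\<close> show ?thesis using that[of "-w0"] by simp
  qed (use w0 \<open>w0 \<noteq> 0\<close> that in auto)
  obtain a1 where a1: "a1^3 = (r1 + w)/2"
    using nth_root_exists[of 3 "(r1 + w)/2"] by auto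
  have "a1 \<noteq> 0" using a1 w(3) by auto
  define b1 where "b1 = -p11/(3*a1)"
  have "3*b1*a1 = -p11" unfolding b1_def using \<open>a1 \<noteq> 0\<close> by simp
  then have "(2*b1^3 - (r1 - w))*(2*a1^3) = 0"
    using w(1) a1 by algebra
  then have b1: "b1^3 = (r1 - w)/2" using \<open>a1 \<noteq> 0\<close> by (simp add: eq_divide_eq mult.commute)
  define d where "d = b1^3 - a1^3"
  have "d \<noteq> 0" using w(2) unfolding d_def a1 b1 by simp
  define a2 b2 where "a2 = (-(p12/3)*b1^2 - a1*(r2/3)) / d"
    and "b2 = (b1*(r2/3) + a1^2*(p12/3)) / d"
  have a2: "a2*d = -(p12/3)*b1^2 - a1*(r2/3)" and b2: "b2*d = b1*(r2/3) + a1^2*(p12/3)"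
    using \<open>d \<noteq> 0\<close> unfolding a2_def b2_def by simp_all
  have "(3*(a1*b2 + a2*b1) + p12)*d = 0" "(3*(a1^2*a2 + b1^2*b2) - r2)*d = 0"
    using a2 b2 unfolding d_def by algebra+
  then have "3*(a1*b2 + a2*b1) = -p12" "3*(a1^2*a2 + b1^2*b2) = r2"
    using \<open>d \<noteq> 0\<close> by (simp_all add: eq_neg_iff_add_eq_0)
  moreover have "3*a1*b1 = -p11" "a1^3 + b1^3 = r1"
    using \<open>3*b1*a1 = -p11\<close> unfolding a1 b1 by (simp_all add: field_simps)
  ultimately have split:
    "cardano_split p11 p12 (-3*a2*b2) r1 r2 (3*(a1*a2^2 + b1*b2^2)) (a2^3 + b2^3) a1 a2 b1 b2"
    unfolding cardano_split_def by simp
  then have "p22 = -3*a2*b2 \<and> r3 = 3*(a1*a2^2 + b1*b2^2) \<and> r4 = a2^3 + b2^3"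
    using cardano_conditions_unique[OF disc cond cardano_split_imp_conditions] by blast
  with split show ?thesis by auto
qed

text \<open>The hypotheses d0, d1, d2 say that 4 P(1,t)^3 + 27 R(1,t)^2 vanishes to order 3 at t = 0.\<close>
lemma cardano_split_exists_degenerate:
  assumes "p11 \<noteq> 0"
    and d0: "4*p11^3 + 27*r1^2 = 0"
    and d1: "12*p11^2*p12 + 54*r1*r2 = 0"
    and d2: "12*p11^2*p22 + 12*p11*p12^2 + 54*r1*r3 + 27*r2^2 = 0"
    and cond: "cardano_conditions p11 p12 p22 r1 r2 r3 r4"
  shows "\<exists>a1 a2. cardano_split p11 p12 p22 r1 r2 r3 r4 a1 a2 a1 a2"
proof -
  from cond have B1: "p11*r3 - p12*r2 + 3*p22*r1 = 0" and B2: "3*p11*r4 - p12*r3 + p22*r2 = 0"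
    unfolding cardano_conditions_def by auto
  obtain a0 where "a0^2 = -p11/3"
    using nth_root_exists[of 2 "-p11/3"] by auto
  then have a0: "3*a0^2 = -p11" by simp
  have "(2*a0^3)^2 = r1^2"
    using a0 d0 by algebra
  then have "2*a0^3 = r1 \<or> 2*(-a0)^3 = r1"
    unfolding power2_eq_iff by auto
  then obtain a1 where a1: "3*a1^2 = -p11" "2*a1^3 = r1"
    using a0 by (metis power2_minus)
  have "a1 \<noteq> 0" using a1(1) \<open>p11 \<noteq> 0\<close> by auto
  define a2 where "a2 = -p12/(6*a1)"
  have P11: "p11 = -3*a1^2" and P12: "p12 = -6*a1*a2" and R1: "r1 = 2*a1^3"
    using a1 \<open>a1 \<noteq> 0\<close> unfolding a2_def by (simp_all add: field_simps)
  have "a1^3*(r2 - 6*a1^2*a2) = 0" using d1 P11 P12 R1 by algebra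
  then have R2: "r2 = 6*a1^2*a2" using \<open>a1 \<noteq> 0\<close> by simp
  have d2': "12*p11^2*(p22 + 3*a2^2) + 54*r1*(r3 - 6*a1*a2^2) = 0"
    using d2 P11 P12 R1 R2 by algebra
  have B1': "p11*(r3 - 6*a1*a2^2) + 3*r1*(p22 + 3*a2^2) = 0"
    using B1 P11 P12 R1 R2 by algebra
  have "p11^3*(p22 + 3*a2^2) = 0" using d2' B1' d0 by algebra
  then have P22: "p22 = -3*a2^2" using \<open>p11 \<noteq> 0\<close> by (simp add: add_eq_0_iff)
  have "p11*(r3 - 6*a1*a2^2) = 0" using B1' P22 by simp
  then have R3: "r3 = 6*a1*a2^2" using \<open>p11 \<noteq> 0\<close> by simp
  have "p11*(r4 - 2*a2^3) = 0" using B2 P11 P12 R2 R3 P22 by algebra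
  then have R4: "r4 = 2*a2^3" using \<open>p11 \<noteq> 0\<close> by simp
  show ?thesis unfolding cardano_split_def
    by (intro exI[of _ a1] exI[of _ a2])
      (simp add: P11 P12 P22 R1 R2 R3 R4 power2_eq_square power3_eq_cube)
qed

text \<open>The substitution x2 \<mapsto> x2 + t x1.\<close>
lemma cardano_conditions_shift:
  assumes "cardano_conditions p11 p12 p22 r1 r2 r3 r4"
  shows "cardano_conditions (p11 + p12*t + p22*t^2) (p12 + 2*p22*t) p22
    (r1 + r2*t + r3*t^2 + r4*t^3) (r2 + 2*r3*t + 3*r4*t^2) (r3 + 3*r4*t) r4"
  using assms unfolding cardano_conditions_def by (elim conjE) (intro conjI; algebra)

lemma cardano_split_unshift:
  assumes "cardano_split (p11 + p12*t + p22*t^2) (p12 + 2*p22*t) p22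
    (r1 + r2*t + r3*t^2 + r4*t^3) (r2 + 2*r3*t + 3*r4*t^2) (r3 + 3*r4*t) r4 a1 a2 b1 b2"
  shows "cardano_split p11 p12 p22 r1 r2 r3 r4 (a1 - t*a2) a2 (b1 - t*b2) b2"
proof -
  from assms have "3*a1*b1 = -(p11 + p12*t + p22*t^2)" "3*(a1*b2 + a2*b1) = -(p12 + 2*p22*t)"
    "3*a2*b2 = -p22" "a1^3 + b1^3 = r1 + r2*t + r3*t^2 + r4*t^3"
    "3*(a1^2*a2 + b1^2*b2) = r2 + 2*r3*t + 3*r4*t^2" "3*(a1*a2^2 + b1*b2^2) = r3 + 3*r4*t"
    "a2^3 + b2^3 = r4"
    unfolding cardano_split_def by auto
  then show ?thesis unfolding cardano_split_def by algebra
qed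

lemma cardano_split_exists:
  assumes cond: "cardano_conditions p11 p12 p22 r1 r2 r3 r4"
  shows "\<exists>a1 a2 b1 b2. cardano_split p11 p12 p22 r1 r2 r3 r4 a1 a2 b1 b2"
proof -
  let ?split =
    "\<lambda>p11 p12 r1 r2 r3. \<exists>a1 a2 b1 b2. cardano_split p11 p12 p22 r1 r2 r3 r4 a1 a2 b1 b2"
  have unshift: "?split p11 p12 r1 r2 r3"
    if "?split (p11 + p12*t + p22*t^2) (p12 + 2*p22*t) (r1 + r2*t + r3*t^2 + r4*t^3)
          (r2 + 2*r3*t + 3*r4*t^2) (r3 + 3*r4*t)" for t
    using that cardano_split_unshift by blast
  note cond_t = cardano_conditions_shift[OF cond]
  define D where "D = [:4*p11^3 + 27*r1^2, 12*p11^2*p12 + 54*r1*r2,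
    12*p11^2*p22 + 12*p11*p12^2 + 54*r1*r3 + 27*r2^2,
    24*p11*p12*p22 + 4*p12^3 + 54*r1*r4 + 54*r2*r3,
    12*p11*p22^2 + 12*p12^2*p22 + 54*r2*r4 + 27*r3^2, 12*p12*p22^2 + 54*r3*r4, 4*p22^3 + 27*r4^2:]"
  have poly_D: "poly D t = 4*(p11 + p12*t + p22*t^2)^3 + 27*(r1 + r2*t + r3*t^2 + r4*t^3)^2" for t
    unfolding D_def by simp algebra
  show ?thesis
  proof (cases "D = 0")
    case False
    then obtain t where "poly D t \<noteq> 0" using poly_all_0_iff_0 by blast
    then show ?thesis
      by (intro unshift[of t] cardano_split_exists_generic cond_t) (simp add: poly_D)
  next
    case True
    then have d: "4*p11^3 + 27*r1^2 = 0" "12*p11^2*p12 + 54*r1*r2 = 0"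
      "12*p11^2*p22 + 12*p11*p12^2 + 54*r1*r3 + 27*r2^2 = 0"
      "24*p11*p12*p22 + 4*p12^3 + 54*r1*r4 + 54*r2*r3 = 0"
      "12*p11*p22^2 + 12*p12^2*p22 + 54*r2*r4 + 27*r3^2 = 0"
      "12*p12*p22^2 + 54*r3*r4 = 0" "4*p22^3 + 27*r4^2 = 0"
      unfolding D_def by simp_all
    show ?thesis
    proof (cases "[:p11, p12, p22:] = 0")
      case True
      then have "r1 = 0 \<and> r2 = 0 \<and> r3 = 0 \<and> r4 = 0" using d by simp
      with True show ?thesis unfolding cardano_split_def by (intro exI[of _ 0]) simp
    next
      case False
      then obtain t where "poly [:p11, p12, p22:] t \<noteq> 0" using poly_all_0_iff_0 by blast
      then have "p11 + p12*t + p22*t^2 \<noteq> 0" by (simp add: algebra_simps power2_eq_square)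
      moreover have "4*(p11 + p12*t + p22*t^2)^3 + 27*(r1 + r2*t + r3*t^2 + r4*t^3)^2 = 0"
        "12*(p11 + p12*t + p22*t^2)^2*(p12 + 2*p22*t)
          + 54*(r1 + r2*t + r3*t^2 + r4*t^3)*(r2 + 2*r3*t + 3*r4*t^2) = 0"
        "12*(p11 + p12*t + p22*t^2)^2*p22 + 12*(p11 + p12*t + p22*t^2)*(p12 + 2*p22*t)^2
          + 54*(r1 + r2*t + r3*t^2 + r4*t^3)*(r3 + 3*r4*t) + 27*(r2 + 2*r3*t + 3*r4*t^2)^2 = 0"
        using d by algebra+
      ultimately show ?thesis
        using unshift[of t] cardano_split_exists_degenerate[OF _ _ _ _ cond_t] by blast
    qed
  qed
qed

definition homogeneous :: "nat \<Rightarrow> poly3 \<Rightarrow> bool" where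
  "homogeneous d P \<longleftrightarrow> (\<forall>a b c. a + b + c \<noteq> d \<longrightarrow> P a b c = 0)"

lemma homogeneous_pmult:
  assumes "homogeneous d P" "homogeneous e Q"
  shows "homogeneous (d + e) (pmult P Q)"
  unfolding homogeneous_def pmult_def
proof (intro allI impI sum.neutral ballI)
  fix a b c a1 b1 c1
  assume deg: "a + b + c \<noteq> d + e" and "a1 \<in> {..a}" "b1 \<in> {..b}" "c1 \<in> {..c}"
  then have "a1 + b1 + c1 \<noteq> d \<or> (a - a1) + (b - b1) + (c - c1) \<noteq> e" by auto
  then show "P a1 b1 c1 * Q (a - a1) (b - b1) (c - c1) = 0"
    using assms unfolding homogeneous_def by auto
qed

lemma homogeneous_linform: "homogeneous 1 (linform v1 v2 v3)"
  unfolding homogeneous_def linform_def by auto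

definition cubic_of ::
    "complex \<Rightarrow> complex \<Rightarrow> complex \<Rightarrow> complex \<Rightarrow> complex \<Rightarrow> complex \<Rightarrow> complex \<Rightarrow> complex \<Rightarrow>
     complex \<Rightarrow> complex \<Rightarrow> poly3" where
  "cubic_of c300 c210 c201 c120 c111 c102 c030 c021 c012 c003 = (\<lambda>a b c.
     if a + b + c \<noteq> 3 then 0
     else if a = 3 then c300 else if a = 2 \<and> b = 1 then c210 else if a = 2 then c201
     else if a = 1 \<and> b = 2 then c120 else if a = 1 \<and> b = 1 then c111 else if a = 1 then c102
     else if b = 3 then c030 else if b = 2 then c021 else if b = 1 then c012 else c003)"

lemma cubic_of_simps:
  "cubic_of c300 c210 c201 c120 c111 c102 c030 c021 c012 c003 3 0 0 = c300"
  "cubic_of c300 c210 c201 c120 c111 c102 c030 c021 c012 c003 2 1 0 = c210"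
  "cubic_of c300 c210 c201 c120 c111 c102 c030 c021 c012 c003 2 0 1 = c201"
  "cubic_of c300 c210 c201 c120 c111 c102 c030 c021 c012 c003 1 2 0 = c120"
  "cubic_of c300 c210 c201 c120 c111 c102 c030 c021 c012 c003 1 1 1 = c111"
  "cubic_of c300 c210 c201 c120 c111 c102 c030 c021 c012 c003 1 0 2 = c102"
  "cubic_of c300 c210 c201 c120 c111 c102 c030 c021 c012 c003 0 3 0 = c030"
  "cubic_of c300 c210 c201 c120 c111 c102 c030 c021 c012 c003 0 2 1 = c021"
  "cubic_of c300 c210 c201 c120 c111 c102 c030 c021 c012 c003 0 1 2 = c012"
  "cubic_of c300 c210 c201 c120 c111 c102 c030 c021 c012 c003 0 0 3 = c003"
  by (simp_all add: cubic_of_def)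

lemma cubic_form_cubic_of: "cubic_form (cubic_of c300 c210 c201 c120 c111 c102 c030 c021 c012 c003)"
  unfolding cubic_form_def cubic_of_def by auto

lemma cubic_form_eqI:
  assumes "cubic_form P" "cubic_form Q"
    and "P 3 0 0 = Q 3 0 0" "P 2 1 0 = Q 2 1 0" "P 2 0 1 = Q 2 0 1" "P 1 2 0 = Q 1 2 0"
      "P 1 1 1 = Q 1 1 1" "P 1 0 2 = Q 1 0 2" "P 0 3 0 = Q 0 3 0" "P 0 2 1 = Q 0 2 1"
      "P 0 1 2 = Q 0 1 2" "P 0 0 3 = Q 0 0 3"
  shows "P = Q"
proof (intro ext)
  fix a b c
  show "P a b c = Q a b c"
  proof (cases "a + b + c = 3")
    case True
    then have "a = 3 \<and> b = 0 \<and> c = 0 \<or> a = 2 \<and> b = 1 \<and> c = 0 \<or> a = 2 \<and> b = 0 \<and> c = 1 \<or>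
      a = 1 \<and> b = 2 \<and> c = 0 \<or> a = 1 \<and> b = 1 \<and> c = 1 \<or> a = 1 \<and> b = 0 \<and> c = 2 \<or>
      a = 0 \<and> b = 3 \<and> c = 0 \<or> a = 0 \<and> b = 2 \<and> c = 1 \<or> a = 0 \<and> b = 1 \<and> c = 2 \<or>
      a = 0 \<and> b = 0 \<and> c = 3"
      by presburger
    then show ?thesis using assms(3-) by auto
  qed (use assms(1,2) in \<open>simp add: cubic_form_def\<close>)
qed

lemma cubic_form_eq_cubic_of:
  assumes "cubic_form f"
  shows "f = cubic_of (f 3 0 0) (f 2 1 0) (f 2 0 1) (f 1 2 0) (f 1 1 1) (f 1 0 2)
    (f 0 3 0) (f 0 2 1) (f 0 1 2) (f 0 0 3)"
  by (rule cubic_form_eqI[OF assms cubic_form_cubic_of]) (simp_all add: cubic_of_def)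

lemma cubic_of_eq_iff:
  "cubic_of c300 c210 c201 c120 c111 c102 c030 c021 c012 c003
     = cubic_of d300 d210 d201 d120 d111 d102 d030 d021 d012 d003 \<longleftrightarrow>
   c300 = d300 \<and> c210 = d210 \<and> c201 = d201 \<and> c120 = d120 \<and> c111 = d111 \<and> c102 = d102 \<and>
   c030 = d030 \<and> c021 = d021 \<and> c012 = d012 \<and> c003 = d003"
proof
  assume "cubic_of c300 c210 c201 c120 c111 c102 c030 c021 c012 c003
     = cubic_of d300 d210 d201 d120 d111 d102 d030 d021 d012 d003" (is "?c = ?d")
  then have "?c a b c = ?d a b c" for a b c by simp
  from this[of 3 0 0] this[of 2 1 0] this[of 2 0 1] this[of 1 2 0] this[of 1 1 1] this[of 1 0 2]
    this[of 0 3 0] this[of 0 2 1] this[of 0 1 2] this[of 0 0 3]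
  show "c300 = d300 \<and> c210 = d210 \<and> c201 = d201 \<and> c120 = d120 \<and> c111 = d111 \<and> c102 = d102 \<and>
   c030 = d030 \<and> c021 = d021 \<and> c012 = d012 \<and> c003 = d003" by (simp add: cubic_of_def)
qed simp

lemma pmult_linforms:
  "pmult (pmult (linform u1 u2 u3) (linform v1 v2 v3)) (linform w1 w2 w3) =
   cubic_of (u1*v1*w1) (u1*v1*w2 + u1*v2*w1 + u2*v1*w1) (u1*v1*w3 + u1*v3*w1 + u3*v1*w1)
     (u1*v2*w2 + u2*v1*w2 + u2*v2*w1)
     (u1*v2*w3 + u1*v3*w2 + u2*v1*w3 + u2*v3*w1 + u3*v1*w2 + u3*v2*w1)
     (u1*v3*w3 + u3*v1*w3 + u3*v3*w1) (u2*v2*w2) (u2*v2*w3 + u2*v3*w2 + u3*v2*w2)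
     (u2*v3*w3 + u3*v2*w3 + u3*v3*w2) (u3*v3*w3)"
proof (rule cubic_form_eqI[OF _ cubic_form_cubic_of])
  have "homogeneous (1 + 1 + 1)
      (pmult (pmult (linform u1 u2 u3) (linform v1 v2 v3)) (linform w1 w2 w3))"
    by (intro homogeneous_pmult homogeneous_linform)
  then show "cubic_form (pmult (pmult (linform u1 u2 u3) (linform v1 v2 v3)) (linform w1 w2 w3))"
    by (simp add: homogeneous_def cubic_form_def)
qed (simp_all add: cubic_of_def pmult_def linform_def eval_nat_numeral atMost_Suc algebra_simps)

lemma hessian3_cubic_of:
  fixes c300 c210 c201 c120 c111 c102 c030 c021 c012 c003 :: complex
  defines "F \<equiv> cubic_of c300 c210 c201 c120 c111 c102 c030 c021 c012 c003"
  shows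
    "hessian3 F 0 0 3 = 12 * c201 * c021 * c003 - 4 * c201 * c012^2 - 3 * c111^2 * c003
      + 4 * c111 * c102 * c012 - 4 * c102^2 * c021"
    "hessian3 F 2 0 1 = 36 * c300 * c120 * c003 - 12 * c300 * c111 * c012 + 12 * c300 * c102 * c021
      - 12 * c210^2 * c003 + 8 * c210 * c201 * c012 - 4 * c201^2 * c021 - 4 * c201 * c120 * c102
      + c201 * c111^2"
    "hessian3 F 1 1 1 = 108 * c300 * c030 * c003 - 12 * c300 * c021 * c012 - 12 * c210 * c120 * c003
      - 4 * c210 * c111 * c012 + 12 * c210 * c102 * c021 + 12 * c201 * c120 * c012
      - 4 * c201 * c111 * c021 - 12 * c201 * c102 * c030 - 4 * c120 * c111 * c102 + c111^3"
    "hessian3 F 0 2 1 = 36 * c210 * c030 * c003 - 4 * c210 * c021 * c012 + 12 * c201 * c030 * c012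
      - 4 * c201 * c021^2 - 12 * c120^2 * c003 + 8 * c120 * c102 * c021 + c111^2 * c021
      - 12 * c111 * c102 * c030"
    "hessian3 F 1 0 2 = 36 * c300 * c021 * c003 - 12 * c300 * c012^2 - 12 * c210 * c111 * c003
      + 8 * c210 * c102 * c012 + 12 * c201 * c120 * c003 - 4 * c201 * c102 * c021
      - 4 * c120 * c102^2 + c111^2 * c102"
    "hessian3 F 0 1 2 = 12 * c210 * c021 * c003 - 4 * c210 * c012^2 + 36 * c201 * c030 * c003
      - 4 * c201 * c021 * c012 - 12 * c120 * c111 * c003 + 8 * c120 * c102 * c012 + c111^2 * c012
      - 12 * c102^2 * c030"
  unfolding F_def hessian3_def pdet3_def pmult_def padd_def psub_def psmult_def pderiv3_def
  by (simp_all add: cubic_of_def eval_nat_numeral atMost_Suc)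
    (simp_all add: algebra_simps power2_eq_square power3_eq_cube)

lemma hessian3_coeffs:
  assumes "cubic_form f"
  shows
    "hessian3 f 0 0 3 = 12 * f 2 0 1 * f 0 2 1 * f 0 0 3 - 4 * f 2 0 1 * (f 0 1 2)^2
      - 3 * (f 1 1 1)^2 * f 0 0 3 + 4 * f 1 1 1 * f 1 0 2 * f 0 1 2 - 4 * (f 1 0 2)^2 * f 0 2 1"
    "hessian3 f 2 0 1 = 36 * f 3 0 0 * f 1 2 0 * f 0 0 3 - 12 * f 3 0 0 * f 1 1 1 * f 0 1 2
      + 12 * f 3 0 0 * f 1 0 2 * f 0 2 1 - 12 * (f 2 1 0)^2 * f 0 0 3
      + 8 * f 2 1 0 * f 2 0 1 * f 0 1 2 - 4 * (f 2 0 1)^2 * f 0 2 1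
      - 4 * f 2 0 1 * f 1 2 0 * f 1 0 2 + f 2 0 1 * (f 1 1 1)^2"
    "hessian3 f 1 1 1 = 108 * f 3 0 0 * f 0 3 0 * f 0 0 3 - 12 * f 3 0 0 * f 0 2 1 * f 0 1 2
      - 12 * f 2 1 0 * f 1 2 0 * f 0 0 3 - 4 * f 2 1 0 * f 1 1 1 * f 0 1 2
      + 12 * f 2 1 0 * f 1 0 2 * f 0 2 1 + 12 * f 2 0 1 * f 1 2 0 * f 0 1 2
      - 4 * f 2 0 1 * f 1 1 1 * f 0 2 1 - 12 * f 2 0 1 * f 1 0 2 * f 0 3 0
      - 4 * f 1 2 0 * f 1 1 1 * f 1 0 2 + (f 1 1 1)^3"
    "hessian3 f 0 2 1 = 36 * f 2 1 0 * f 0 3 0 * f 0 0 3 - 4 * f 2 1 0 * f 0 2 1 * f 0 1 2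
      + 12 * f 2 0 1 * f 0 3 0 * f 0 1 2 - 4 * f 2 0 1 * (f 0 2 1)^2 - 12 * (f 1 2 0)^2 * f 0 0 3
      + 8 * f 1 2 0 * f 1 0 2 * f 0 2 1 + (f 1 1 1)^2 * f 0 2 1 - 12 * f 1 1 1 * f 1 0 2 * f 0 3 0"
    "hessian3 f 1 0 2 = 36 * f 3 0 0 * f 0 2 1 * f 0 0 3 - 12 * f 3 0 0 * (f 0 1 2)^2
      - 12 * f 2 1 0 * f 1 1 1 * f 0 0 3 + 8 * f 2 1 0 * f 1 0 2 * f 0 1 2
      + 12 * f 2 0 1 * f 1 2 0 * f 0 0 3 - 4 * f 2 0 1 * f 1 0 2 * f 0 2 1
      - 4 * f 1 2 0 * (f 1 0 2)^2 + (f 1 1 1)^2 * f 1 0 2"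
    "hessian3 f 0 1 2 = 12 * f 2 1 0 * f 0 2 1 * f 0 0 3 - 4 * f 2 1 0 * (f 0 1 2)^2
      + 36 * f 2 0 1 * f 0 3 0 * f 0 0 3 - 4 * f 2 0 1 * f 0 2 1 * f 0 1 2
      - 12 * f 1 2 0 * f 1 1 1 * f 0 0 3 + 8 * f 1 2 0 * f 1 0 2 * f 0 1 2 + (f 1 1 1)^2 * f 0 1 2
      - 12 * (f 1 0 2)^2 * f 0 3 0"
  using arg_cong[OF cubic_form_eq_cubic_of[OF assms], of hessian3]
  by (simp_all only: hessian3_cubic_of)

text \<open>The form g of the statement; e.g. its coefficient g_113 is \<open>hessian_defect f 2 0 1\<close>.\<close>
definition hessian_defect :: "poly3 \<Rightarrow> poly3" where
  "hessian_defect f = psub (psmult (hessian3 f 0 0 3) f) (psmult (f 0 0 3) (hessian3 f))"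

lemma hessian_defect_apply:
  "hessian_defect f a b c = hessian3 f 0 0 3 * f a b c - f 0 0 3 * hessian3 f a b c"
  by (simp add: hessian_defect_def psub_def psmult_def)

lemma hessian3_linear_product:
  fixes u1 u2 u3 v1 v2 v3 w1 w2 w3 :: complex
  defines "F \<equiv> pmult (pmult (linform u1 u2 u3) (linform v1 v2 v3)) (linform w1 w2 w3)"
    and "\<delta> \<equiv> u1*(v2*w3 - v3*w2) - u2*(v1*w3 - v3*w1) + u3*(v1*w2 - v2*w1)"
  shows "hessian3 F 0 0 3 = \<delta>^2 * F 0 0 3" "hessian3 F 2 0 1 = \<delta>^2 * F 2 0 1"
    "hessian3 F 1 1 1 = \<delta>^2 * F 1 1 1" "hessian3 F 0 2 1 = \<delta>^2 * F 0 2 1"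
    "hessian3 F 1 0 2 = \<delta>^2 * F 1 0 2" "hessian3 F 0 1 2 = \<delta>^2 * F 0 1 2"
proof -
  have cubic: "cubic_form F" unfolding F_def pmult_linforms by (rule cubic_form_cubic_of)
  show "hessian3 F 0 0 3 = \<delta>^2 * F 0 0 3" "hessian3 F 2 0 1 = \<delta>^2 * F 2 0 1"
    "hessian3 F 1 1 1 = \<delta>^2 * F 1 1 1" "hessian3 F 0 2 1 = \<delta>^2 * F 0 2 1"
    "hessian3 F 1 0 2 = \<delta>^2 * F 1 0 2" "hessian3 F 0 1 2 = \<delta>^2 * F 0 1 2"
    unfolding hessian3_coeffs[OF cubic] unfolding F_def pmult_linforms cubic_of_simps \<delta>_def
    by algebra+
qed

lemma hessian_defect_eq_0_if_completely_reducible: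
  assumes "completely_reducible f"
  shows "hessian_defect f 2 0 1 = 0" "hessian_defect f 1 1 1 = 0" "hessian_defect f 0 2 1 = 0"
    "hessian_defect f 1 0 2 = 0" "hessian_defect f 0 1 2 = 0"
proof -
  from assms obtain u1 u2 u3 v1 v2 v3 w1 w2 w3
    where "f = pmult (pmult (linform u1 u2 u3) (linform v1 v2 v3)) (linform w1 w2 w3)"
    unfolding completely_reducible_def by blast
  then obtain \<delta> where "hessian3 f 0 0 3 = \<delta>^2 * f 0 0 3" "hessian3 f 2 0 1 = \<delta>^2 * f 2 0 1"
    "hessian3 f 1 1 1 = \<delta>^2 * f 1 1 1" "hessian3 f 0 2 1 = \<delta>^2 * f 0 2 1"
    "hessian3 f 1 0 2 = \<delta>^2 * f 1 0 2" "hessian3 f 0 1 2 = \<delta>^2 * f 0 1 2"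
    using hessian3_linear_product[of u1 u2 u3 v1 v2 v3 w1 w2 w3, folded \<open>f = _\<close>] by blast
  then show "hessian_defect f 2 0 1 = 0" "hessian_defect f 1 1 1 = 0" "hessian_defect f 0 2 1 = 0"
    "hessian_defect f 1 0 2 = 0" "hessian_defect f 0 1 2 = 0"
    unfolding hessian_defect_apply by (simp_all only:) (simp_all add: algebra_simps)
qed

lemma hessian_defect_eq_0_if_nondegenerate:
  assumes cubic: "cubic_form f"
    and nondeg: "4 * f 2 0 1 * f 0 2 1 - (f 1 1 1)^2 \<noteq> 0"
    and g: "hessian_defect f 2 0 1 = 0" "hessian_defect f 1 1 1 = 0" "hessian_defect f 0 2 1 = 0"
  shows "hessian_defect f 1 0 2 = 0" "hessian_defect f 0 1 2 = 0"
proof -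
  have "(4 * f 2 0 1 * f 0 2 1 - (f 1 1 1)^2) * hessian_defect f 1 0 2 =
      (3 * f 1 0 2 * f 0 2 1 - 3 * f 0 0 3 * f 1 2 0 - f 0 1 2 * f 1 1 1) * hessian_defect f 2 0 1
    + (3 * f 0 0 3 * f 2 1 0 - f 1 0 2 * f 1 1 1 + f 0 1 2 * f 2 0 1) * hessian_defect f 1 1 1
    + (f 1 0 2 * f 2 0 1 - 9 * f 0 0 3 * f 3 0 0) * hessian_defect f 0 2 1"
   "(4 * f 2 0 1 * f 0 2 1 - (f 1 1 1)^2) * hessian_defect f 0 1 2 =
      (f 0 1 2 * f 0 2 1 - 9 * f 0 0 3 * f 0 3 0) * hessian_defect f 2 0 1
    + (3 * f 0 0 3 * f 1 2 0 + f 1 0 2 * f 0 2 1 - f 0 1 2 * f 1 1 1) * hessian_defect f 1 1 1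
    + (3 * f 0 1 2 * f 2 0 1 - 3 * f 0 0 3 * f 2 1 0 - f 1 0 2 * f 1 1 1) * hessian_defect f 0 2 1"
    unfolding hessian_defect_apply hessian3_coeffs[OF cubic] by algebra+
  then show "hessian_defect f 1 0 2 = 0" "hessian_defect f 0 1 2 = 0"
    using nondeg unfolding g by simp_all
qed

lemma psmult_pmult: "psmult k (pmult P Q) = pmult (psmult k P) Q"
  by (simp add: psmult_def pmult_def sum_distrib_left mult.assoc)

lemma psmult_linform: "psmult k (linform v1 v2 v3) = linform (k*v1) (k*v2) (k*v3)"
  unfolding psmult_def linform_def by (intro ext) simp

lemma completely_reducible_psmult:
  assumes "completely_reducible f"
  shows "completely_reducible (psmult k f)"
proof -
  from assms obtain a1 a2 a3 b1 b2 b3 c1 c2 c3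
    where "f = pmult (pmult (linform a1 a2 a3) (linform b1 b2 b3)) (linform c1 c2 c3)"
    unfolding completely_reducible_def by blast
  then have "psmult k f
      = pmult (pmult (linform (k*a1) (k*a2) (k*a3)) (linform b1 b2 b3)) (linform c1 c2 c3)"
    by (simp add: psmult_pmult psmult_linform)
  then show ?thesis unfolding completely_reducible_def by blast
qed

text \<open>The cubic y^3 + P y + R for y = l1 x1 + l2 x2 + l3 x3 and P, R as in \<open>cardano_split\<close>.\<close>
definition depressed_cubic ::
    "complex \<Rightarrow> complex \<Rightarrow> complex \<Rightarrow> complex \<Rightarrow> complex \<Rightarrow> complex \<Rightarrow> complex \<Rightarrow> complex \<Rightarrow>
     complex \<Rightarrow> complex \<Rightarrow> poly3" where
  "depressed_cubic l1 l2 l3 p11 p12 p22 r1 r2 r3 r4 =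
     cubic_of (l1^3 + p11*l1 + r1) (3*l1^2*l2 + p11*l2 + p12*l1 + r2) (3*l1^2*l3 + p11*l3)
       (3*l1*l2^2 + p12*l2 + p22*l1 + r3) (6*l1*l2*l3 + p12*l3) (3*l1*l3^2)
       (l2^3 + p22*l2 + r4) (3*l2^2*l3 + p22*l3) (3*l2*l3^2) (l3^3)"

lemma depressed_cubic_factorization:
  assumes "cardano_split p11 p12 p22 r1 r2 r3 r4 a1 a2 b1 b2" and \<omega>: "\<omega>^2 + \<omega> + 1 = 0"
  shows "pmult (pmult (linform (l1 + a1 + b1) (l2 + a2 + b2) l3)
      (linform (l1 + \<omega>*a1 + \<omega>^2*b1) (l2 + \<omega>*a2 + \<omega>^2*b2) l3))
      (linform (l1 + \<omega>^2*a1 + \<omega>*b1) (l2 + \<omega>^2*a2 + \<omega>*b2) l3)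
    = depressed_cubic l1 l2 l3 p11 p12 p22 r1 r2 r3 r4"
proof -
  from assms(1) have "3*a1*b1 = -p11" "3*(a1*b2 + a2*b1) = -p12" "3*a2*b2 = -p22"
    "a1^3 + b1^3 = r1" "3*(a1^2*a2 + b1^2*b2) = r2" "3*(a1*a2^2 + b1*b2^2) = r3" "a2^3 + b2^3 = r4"
    unfolding cardano_split_def by auto
  with \<omega> show ?thesis
    unfolding pmult_linforms depressed_cubic_def cubic_of_eq_iff
    by (intro conjI) (algebra | simp add: power3_eq_cube)+
qed

lemma completely_reducible_if_hessian_defect_eq_0:
  assumes cubic: "cubic_form f" and "f 0 0 3 \<noteq> 0"
    and g: "hessian_defect f 2 0 1 = 0" "hessian_defect f 1 1 1 = 0" "hessian_defect f 0 2 1 = 0"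
      "hessian_defect f 1 0 2 = 0" "hessian_defect f 0 1 2 = 0"
  shows "completely_reducible f"
proof -
  define p11 p12 p22 where "p11 = 3*(3 * f 0 0 3 * f 2 0 1 - (f 1 0 2)^2)"
    and "p12 = 3*(3 * f 0 0 3 * f 1 1 1 - 2 * f 1 0 2 * f 0 1 2)"
    and "p22 = 3*(3 * f 0 0 3 * f 0 2 1 - (f 0 1 2)^2)"
  define r1 r2 r3 r4 where "r1 = 27 * (f 0 0 3)^2 * f 3 0 0 - (f 1 0 2)^3 - p11 * f 1 0 2"
    and "r2 = 27 * (f 0 0 3)^2 * f 2 1 0 - 3 * (f 1 0 2)^2 * f 0 1 2 - p11 * f 0 1 2 - p12 * f 1 0 2"
    and "r3 = 27 * (f 0 0 3)^2 * f 1 2 0 - 3 * f 1 0 2 * (f 0 1 2)^2 - p12 * f 0 1 2 - p22 * f 1 0 2"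
    and "r4 = 27 * (f 0 0 3)^2 * f 0 3 0 - (f 0 1 2)^3 - p22 * f 0 1 2"
  note defs = p11_def p12_def p22_def r1_def r2_def r3_def r4_def
  have completed: "psmult (27 * (f 0 0 3)^2) f
      = depressed_cubic (f 1 0 2) (f 0 1 2) (3 * f 0 0 3) p11 p12 p22 r1 r2 r3 r4"
    unfolding depressed_cubic_def
  proof (rule cubic_form_eqI[OF _ cubic_form_cubic_of])
    show "cubic_form (psmult (27 * (f 0 0 3)^2) f)"
      using cubic by (simp add: cubic_form_def psmult_def)
  qed (unfold psmult_def cubic_of_simps defs, algebra+)
  have "4*((4*p11*p22 - p12^2)*p11 - 9*r1*r3 + 3*r2^2) =
      729*(f 0 0 3)^2 * hessian_defect f 2 0 1 - 486 * f 0 0 3 * f 1 0 2 * hessian_defect f 1 0 2"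
    "4*((4*p11*p22 - p12^2)*p12 - 27*r1*r4 + 3*r2*r3) = 729*(f 0 0 3)^2 * hessian_defect f 1 1 1
      - 486 * f 0 0 3 * (f 0 1 2 * hessian_defect f 1 0 2 + f 1 0 2 * hessian_defect f 0 1 2)"
    "4*((4*p11*p22 - p12^2)*p22 - 9*r2*r4 + 3*r3^2) =
      729*(f 0 0 3)^2 * hessian_defect f 0 2 1 - 486 * f 0 0 3 * f 0 1 2 * hessian_defect f 0 1 2"
    "4*(p11*r3 - p12*r2 + 3*p22*r1) = -81 * f 0 0 3 * hessian_defect f 1 0 2"
    "4*(3*p11*r4 - p12*r3 + p22*r2) = -81 * f 0 0 3 * hessian_defect f 0 1 2"
    unfolding hessian_defect_apply hessian3_coeffs[OF cubic] defs by algebra+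
  then have "cardano_conditions p11 p12 p22 r1 r2 r3 r4"
    unfolding cardano_conditions_def g by algebra
  then obtain a1 a2 b1 b2 where split: "cardano_split p11 p12 p22 r1 r2 r3 r4 a1 a2 b1 b2"
    using cardano_split_exists by blast
  obtain s :: complex where "s^2 = -3" using nth_root_exists[of 2 "-3"] by auto
  then have "((s - 1)/2)^2 + (s - 1)/2 + 1 = 0" by (simp add: field_simps power2_eq_square)
  from depressed_cubic_factorization[OF split this] completed
  have "completely_reducible (psmult (27 * (f 0 0 3)^2) f)"
    unfolding completely_reducible_def by metis
  then have "completely_reducible (psmult (1 / (27 * (f 0 0 3)^2)) (psmult (27 * (f 0 0 3)^2) f))"
    by (rule completely_reducible_psmult)
  then show ?thesis using \<open>f 0 0 3 \<noteq> 0\<close> by (simp add: psmult_def)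
qed

lemma coeff3_simps:
  "coeff3 P 3 3 3 = P 0 0 3" "coeff3 P 1 1 3 = P 2 0 1" "coeff3 P 1 2 3 = P 1 1 1"
  "coeff3 P 2 2 3 = P 0 2 1" "coeff3 P 1 3 3 = P 1 0 2" "coeff3 P 2 3 3 = P 0 1 2"
  by (simp_all add: coeff3_def cnt_def numeral_3_eq_3 numeral_2_eq_2)

theorem lemma10p1:
  fixes f :: poly3
  assumes "cubic_form f"
    and "coeff3 f 3 3 3 \<noteq> 0"
  shows "let \<Delta> = hessian3 f;
             g = psub (psmult (coeff3 \<Delta> 3 3 3) f) (psmult (coeff3 f 3 3 3) \<Delta>)
         in (completely_reducible f \<longleftrightarrow>
               (coeff3 g 1 1 3 = 0 \<and> coeff3 g 1 2 3 = 0 \<and> coeff3 g 2 2 3 = 0 \<and>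
                coeff3 g 1 3 3 = 0 \<and> coeff3 g 2 3 3 = 0))
          \<and> (4 * coeff3 f 1 1 3 * coeff3 f 2 2 3 - (coeff3 f 1 2 3)^2 \<noteq> 0 \<longrightarrow>
               (completely_reducible f \<longleftrightarrow>
                 (coeff3 g 1 1 3 = 0 \<and> coeff3 g 1 2 3 = 0 \<and> coeff3 g 2 2 3 = 0)))"
proof -
  have "f 0 0 3 \<noteq> 0" using assms(2) unfolding coeff3_simps .
  note forward = hessian_defect_eq_0_if_completely_reducible
    and converse = completely_reducible_if_hessian_defect_eq_0[OF assms(1) this]
    and nondeg = hessian_defect_eq_0_if_nondegenerate[OF assms(1)]
  show ?thesis
    unfolding Let_def coeff3_simps hessian_defect_def[symmetric]
    using forward converse nondeg by meson
qed

end
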